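(* Let $A,B$ be finite nonempty subsets of an abelian group $\mathbf G$ and let $k\ge1$ be an integer. Suppose $|A-A|\le K|A|$ and $\mathsf E_{2k+2}(A)=M|A|^{2k+3}/K^{2k+1}$ for some $K,M>0$. Then there exist a set $T\subseteq A-A$ with $|T|\ge K|A|/(16M)$ and an element $u\in\mathbf G$ such that for every $t\in T+u$, $$\sum_{x\in\mathbf G}\big|(A*B)(x)-(A*B)(x+t)\big|^2\le 32|A|^2|B|/k.$$
   Context: Sets are identified with their indicator functions; $(A*B)(x)=\sum_{y}A(y)B(x-y)$. $(A\circ A)(x)=|\{(a,b)\in A^2:b-a=x\}|$ and $\mathsf E_j(A)=\sum_x(A\circ A)(x)^j$. *)

theory Defs
  imports "HOL-Analysis.Analysis"
begin

text \<open>Sets are identified with indicator functions.  Convolution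
  (A*B)(x) = sum over y of A(y) B(x-y) = number of y in A with x - y in B.\<close>
definition conv :: "'a::ab_group_add set \<Rightarrow> 'a set \<Rightarrow> 'a \<Rightarrow> real" where
  "conv A B x = real (card {y \<in> A. x - y \<in> B})"

definition corr :: "'a::ab_group_add set \<Rightarrow> 'a \<Rightarrow> real" where
  "corr A x = real (card {(a, b) \<in> A \<times> A. b - a = x})"

definition energy :: "nat \<Rightarrow> 'a::ab_group_add set \<Rightarrow> real" where
  "energy j A = (\<Sum>\<^sub>\<infinity> x. corr A x ^ j)"

definition diffset :: "'a::ab_group_add set \<Rightarrow> 'a set \<Rightarrow> 'a set" where
  "diffset A B = {a - b | a b. a \<in> A \<and> b \<in> B}"

end

theory Submission
  imports Defs
begin

(*
  Sample a tuple a \<in> A^m, m = k + 1.  For each x the average of |A| 1_B(x - a_i) over the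
  entries of a is an unbiased estimator of (A*B)(x); summing its variances over x bounds the
  total squared error over all |A|^m tuples by m^(-1) |A|^(m+2) |B|.  By Markov's inequality at
  least half of the tuples are good, and if both a and its translate a + t are good, then t is an
  almost period of A*B since (u + v)^2 \<le> 2 u^2 + 2 v^2.

  A tuple is determined up to translation by its shape (a_i - a_1), of which there are at most
  |A - A|^k.  By Cauchy-Schwarz the good tuples G therefore contain at least |G|^2 / |A - A|^k
  pairs of translates.  A fixed translation t occurs in at most (A\<circ>A)(t)^m such pairs, so a
  second Cauchy-Schwarz against E_2m(A) shows that many distinct t occur.
*)

definition tuples :: "'a set \<Rightarrow> nat \<Rightarrow> 'a list set" where
  "tuples A m = {xs. set xs \<subseteq> A \<and> length xs = m}"

lemma finite_tuples: "finite A \<Longrightarrow> finite (tuples A m)"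
  unfolding tuples_def by (rule finite_lists_length_eq)

lemma card_tuples: "finite A \<Longrightarrow> card (tuples A m) = card A ^ m"
  unfolding tuples_def by (rule card_lists_length_eq)

lemma sum_tuples_Suc:
  assumes "finite A"
  shows "(\<Sum>a\<in>tuples A (Suc m). F a) = (\<Sum>y\<in>A. \<Sum>a\<in>tuples A m. F (y # a))"
proof -
  have "tuples A (Suc m) = (\<lambda>(a, y). y # a) ` (tuples A m \<times> A)"
    unfolding tuples_def by (rule lists_length_Suc_eq)
  moreover have "inj_on (\<lambda>(a, y). y # a) (tuples A m \<times> A)"
    by (auto simp: inj_on_def)
  ultimately have "(\<Sum>a\<in>tuples A (Suc m). F a) = (\<Sum>(a, y)\<in>tuples A m \<times> A. F (y # a))"
    by (simp add: sum.reindex split_def)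
  also have "\<dots> = (\<Sum>y\<in>A. \<Sum>a\<in>tuples A m. F (y # a))"
    by (simp add: sum.cartesian_product[symmetric] sum.swap[of _ A])
  finally show ?thesis .
qed

lemma sum_tuples_sum_list_squared:
  fixes h :: "'a \<Rightarrow> real"
  assumes "finite A" and centered: "sum h A = 0"
  shows "(\<Sum>a\<in>tuples A m. (\<Sum>y\<leftarrow>a. h y)\<^sup>2)
    = real m * real (card A) ^ (m - 1) * (\<Sum>y\<in>A. (h y)\<^sup>2)"
proof (induction m)
  case 0
  then show ?case by (simp add: tuples_def)
next
  case (Suc m)
  let ?n = "real (card A)" and ?S = "\<lambda>a. \<Sum>y\<leftarrow>a. h y"
  have "(\<Sum>a\<in>tuples A (Suc m). (?S a)\<^sup>2)
      = (\<Sum>y\<in>A. \<Sum>a\<in>tuples A m. (h y)\<^sup>2 + 2 * h y * ?S a + (?S a)\<^sup>2)"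
    using assms(1) by (simp add: sum_tuples_Suc power2_sum add_ac)
  also have "\<dots> = ?n ^ m * (\<Sum>y\<in>A. (h y)\<^sup>2) + 2 * (\<Sum>a\<in>tuples A m. ?S a) * sum h A
      + ?n * (\<Sum>a\<in>tuples A m. (?S a)\<^sup>2)"
    using assms(1)
    by (simp add: sum.distrib sum_distrib_left sum_distrib_right card_tuples algebra_simps
        sum.swap[of _ A])
  also have "\<dots> = real (Suc m) * ?n ^ (Suc m - 1) * (\<Sum>y\<in>A. (h y)\<^sup>2)"
    using Suc centered by (cases m) (simp_all add: algebra_simps)
  finally show ?case .
qed

lemma infsum_eq_sum_outside_zero:
  assumes "finite S" "\<And>x. x \<notin> S \<Longrightarrow> f x = 0"
  shows "(\<Sum>\<^sub>\<infinity>x. f x) = sum f S"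
proof -
  have "(\<Sum>\<^sub>\<infinity>x. f x) = infsum f S"
    by (rule infsum_cong_neutral) (use assms(2) in auto)
  with assms(1) show ?thesis by simp
qed

lemma markov_card:
  fixes f :: "'a \<Rightarrow> real"
  assumes "finite S" "\<And>x. x \<in> S \<Longrightarrow> f x \<ge> 0" "c > 0"
  shows "real (card S) - sum f S / c \<le> real (card {x\<in>S. f x \<le> c})"
proof -
  let ?bad = "{x\<in>S. \<not> f x \<le> c}"
  have "real (card ?bad) * c = (\<Sum>x\<in>?bad. c)" by simp
  also have "\<dots> \<le> sum f ?bad" by (rule sum_mono) auto
  also have "\<dots> \<le> sum f S" by (rule sum_mono2) (use assms in auto)
  finally have "real (card ?bad) \<le> sum f S / c" using assms(3) by (simp add: field_simps)
  moreover have "card S = card {x\<in>S. f x \<le> c} + card ?bad"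
    using assms(1) by (subst card_Un_disjoint[symmetric]) (auto intro: arg_cong[where f=card])
  ultimately show ?thesis by simp
qed

definition sample_conv :: "'a::ab_group_add set \<Rightarrow> 'a list \<Rightarrow> 'a \<Rightarrow> real" where
  "sample_conv B a x = (\<Sum>y\<leftarrow>a. indicator B (x - y))"

(* m^2 times the squared L^2 distance between A*B and its empirical estimate
   |A|/m * sample_conv B a from the m-tuple a; both functions vanish outside A + B. *)
definition sample_error :: "'a::ab_group_add set \<Rightarrow> 'a set \<Rightarrow> 'a list \<Rightarrow> real" where
  "sample_error A B a =
     (\<Sum>x\<in>A + B. (real (card A) * sample_conv B a x - real (length a) * conv A B x)\<^sup>2)"

definition good_samples :: "'a::ab_group_add set \<Rightarrow> 'a set \<Rightarrow> nat \<Rightarrow> 'a list set" where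
  "good_samples A B m =
     {a\<in>tuples A m. sample_error A B a \<le> 2 * real m * (real (card A))\<^sup>2 * real (card B)}"

lemma sum_indicator_comp:
  "finite S \<Longrightarrow> (\<Sum>z\<in>S. indicator B (f z) :: real) = real (card {z\<in>S. f z \<in> B})"
  by (auto simp: indicator_def sum.If_cases intro!: arg_cong[where f = card])

lemma conv_eq_sum_indicator: "finite A \<Longrightarrow> conv A B x = (\<Sum>y\<in>A. indicator B (x - y))"
  unfolding conv_def by (simp add: sum_indicator_comp)

lemma conv_eq_0_outside_sumset:
  assumes "x \<notin> A + B"
  shows "conv A B x = 0"
proof -
  have "{y\<in>A. x - y \<in> B} = {}"
    using assms by (force simp: set_plus_def)
  then show ?thesis unfolding conv_def by (simp only: card.empty of_nat_0)
qed

lemma sample_conv_eq_0_outside_sumset: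
  "set a \<subseteq> A \<Longrightarrow> x \<notin> A + B \<Longrightarrow> sample_conv B a x = 0"
  unfolding sample_conv_def by (induction a) (force simp: set_plus_def indicator_def)+

lemma sample_conv_translate: "sample_conv B (map (\<lambda>y. y + t) a) (x + t) = sample_conv B a x"
  unfolding sample_conv_def by (simp add: o_def)

lemma sample_error_nonneg: "sample_error A B a \<ge> 0"
  unfolding sample_error_def by (simp add: sum_nonneg)

lemma sum_conv_sumset:
  assumes "finite A" "finite B"
  shows "(\<Sum>x\<in>A + B. conv A B x) = real (card A) * real (card B)"
proof -
  have "(\<Sum>x\<in>A + B. conv A B x) = (\<Sum>x\<in>A + B. \<Sum>y\<in>A. indicator B (x - y))"
    using assms(1) by (simp add: conv_eq_sum_indicator)
  also have "\<dots> = (\<Sum>y\<in>A. real (card {x\<in>A + B. x - y \<in> B}))"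
    using assms by (subst sum.swap) (simp add: finite_set_plus sum_indicator_comp)
  also have "\<dots> = (\<Sum>y\<in>A. real (card B))"
  proof (rule sum.cong)
    fix y assume "y \<in> A"
    then have "{x\<in>A + B. x - y \<in> B} = (\<lambda>b. y + b) ` B" by (force simp: set_plus_def)
    then show "real (card {x\<in>A + B. x - y \<in> B}) = real (card B)"
      by (simp add: card_image)
  qed simp
  finally show ?thesis by simp
qed

lemma sum_centered_indicator_sq:
  assumes "finite A"
  shows "(\<Sum>y\<in>A. (real (card A) * indicator B (x - y) - conv A B x)\<^sup>2)
    = (real (card A))\<^sup>2 * conv A B x - real (card A) * (conv A B x)\<^sup>2"
proof -
  let ?n = "real (card A)" and ?ind = "\<lambda>y. indicator B (x - y) :: real"
  have "(\<Sum>y\<in>A. (?n * ?ind y - conv A B x)\<^sup>2)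
      = (\<Sum>y\<in>A. ?n\<^sup>2 * ?ind y - 2 * ?n * conv A B x * ?ind y + (conv A B x)\<^sup>2)"
    by (intro sum.cong refl) (simp add: indicator_def power2_eq_square algebra_simps)
  also have "\<dots> = ?n\<^sup>2 * conv A B x - ?n * (conv A B x)\<^sup>2"
    using assms by (simp add: sum.distrib sum_subtractf sum_distrib_left[symmetric]
        conv_eq_sum_indicator power2_eq_square)
  finally show ?thesis .
qed

lemma sum_sample_error_tuples:
  assumes "finite A" "finite B"
  shows "(\<Sum>a\<in>tuples A m. sample_error A B a) \<le> real m * real (card A) ^ (m + 2) * real (card B)"
proof -
  let ?n = "real (card A)"
  let ?h = "\<lambda>x y. ?n * indicator B (x - y) - conv A B x"
  have centered: "sum (?h x) A = 0" for x
    using assms(1) by (simp add: sum_subtractf conv_eq_sum_indicator sum_distrib_left)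
  have error_as_sum:
    "?n * sample_conv B a x - real (length a) * conv A B x = (\<Sum>y\<leftarrow>a. ?h x y)" for a x
    by (induction a) (simp_all add: sample_conv_def algebra_simps)
  have "(\<Sum>a\<in>tuples A m. sample_error A B a)
      = (\<Sum>x\<in>A + B. \<Sum>a\<in>tuples A m. (\<Sum>y\<leftarrow>a. ?h x y)\<^sup>2)"
    unfolding sample_error_def by (subst sum.swap) (simp only: error_as_sum)
  also have "\<dots> = (\<Sum>x\<in>A + B. real m * ?n ^ (m - 1) * (\<Sum>y\<in>A. (?h x y)\<^sup>2))"
    using sum_tuples_sum_list_squared[OF assms(1) centered] by simp
  also have "\<dots> \<le> (\<Sum>x\<in>A + B. real m * ?n ^ (m - 1) * (?n\<^sup>2 * conv A B x))"
    by (intro sum_mono mult_left_mono) (simp_all add: sum_centered_indicator_sq assms(1))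
  also have "\<dots> = real m * ?n ^ (m - 1) * ?n\<^sup>2 * (?n * real (card B))"
    using assms by (simp add: sum_distrib_left[symmetric] sum_conv_sumset mult.assoc)
  also have "\<dots> = real m * ?n ^ (m + 2) * real (card B)"
    by (cases m) (simp_all add: power2_eq_square)
  finally show ?thesis .
qed

lemma card_good_samples:
  assumes "finite A" "finite B" "A \<noteq> {}" "B \<noteq> {}" "m > 0"
  shows "real (card A) ^ m / 2 \<le> real (card (good_samples A B m))"
proof -
  let ?c = "2 * real m * (real (card A))\<^sup>2 * real (card B)"
  have "?c > 0" using assms by (simp add: card_gt_0_iff)
  then have "real (card (tuples A m)) - sum (sample_error A B) (tuples A m) / ?c
      \<le> real (card {a\<in>tuples A m. sample_error A B a \<le> ?c})"
    by (intro markov_card finite_tuples assms(1) sample_error_nonneg)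
  moreover have "sum (sample_error A B) (tuples A m) / ?c \<le> real (card A) ^ m / 2"
    using sum_sample_error_tuples[OF assms(1,2), of m] \<open>?c > 0\<close>
    by (simp add: divide_le_eq power_add power2_eq_square algebra_simps)
  ultimately show ?thesis using assms(1) by (simp add: card_tuples good_samples_def)
qed

lemma sum_sq_diff_conv_translate_le:
  assumes "finite A" "finite B" "a \<in> tuples A m" "map (\<lambda>y. y + t) a \<in> tuples A m" "m > 0"
    and "sample_error A B a \<le> c" "sample_error A B (map (\<lambda>y. y + t) a) \<le> c"
  shows "(\<Sum>\<^sub>\<infinity>x. \<bar>conv A B x - conv A B (x + t)\<bar>\<^sup>2) \<le> 4 * c / (real m)\<^sup>2"
proof -
  let ?n = "real (card A)" and ?f = "conv A B" and ?a' = "map (\<lambda>y. y + t) a"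
  define p where "p x = ?n * sample_conv B a x - real m * ?f x" for x
  define q where "q x = ?n * sample_conv B ?a' x - real m * ?f x" for x
  define W where "W = (A + B) \<union> (\<lambda>x. x - t) ` (A + B)"
  have finW: "finite W" unfolding W_def using assms(1,2) by (simp add: finite_set_plus)
  have len: "length a = m" "length ?a' = m" "set a \<subseteq> A" "set ?a' \<subseteq> A"
    using assms(3,4) by (simp_all add: tuples_def)
  have p0: "p x = 0" and q0: "q x = 0" if "x \<notin> A + B" for x
    using that len by (simp_all add: p_def q_def sample_conv_eq_0_outside_sumset conv_eq_0_outside_sumset)
  have sum_p: "(\<Sum>x\<in>W. (p x)\<^sup>2) = sample_error A B a"
    unfolding sample_error_def p_def[symmetric] len(1)
    by (rule sum.mono_neutral_right[OF finW]) (auto simp: W_def p0)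
  have sum_q: "(\<Sum>x\<in>W. (q (x + t))\<^sup>2) = sample_error A B ?a'"
  proof -
    have "(\<Sum>x\<in>W. (q (x + t))\<^sup>2) = (\<Sum>x\<in>(\<lambda>x. x + t) ` W. (q x)\<^sup>2)"
      by (simp add: sum.reindex inj_on_def)
    also have "\<dots> = (\<Sum>x\<in>A + B. (q x)\<^sup>2)"
    proof (rule sum.mono_neutral_right)
      show "A + B \<subseteq> (\<lambda>x. x + t) ` W"
        unfolding W_def by (auto intro: image_eqI[where x = "_ - t"])
    qed (use finW q0 in auto)
    finally show ?thesis unfolding sample_error_def q_def len(2) .
  qed
  have "(\<Sum>\<^sub>\<infinity>x. \<bar>?f x - ?f (x + t)\<bar>\<^sup>2)
      = (\<Sum>x\<in>W. \<bar>?f x - ?f (x + t)\<bar>\<^sup>2)"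
  proof (rule infsum_eq_sum_outside_zero[OF finW])
    fix x assume "x \<notin> W"
    then have "x \<notin> A + B" "x + t \<notin> A + B" unfolding W_def by (auto intro: rev_image_eqI)
    then show "\<bar>?f x - ?f (x + t)\<bar>\<^sup>2 = 0" by (simp add: conv_eq_0_outside_sumset)
  qed
  also have "\<dots> \<le> (\<Sum>x\<in>W. 2 * (p x)\<^sup>2 + 2 * (q (x + t))\<^sup>2) / (real m)\<^sup>2"
  proof -
    have "real m * (?f x - ?f (x + t)) = q (x + t) - p x" for x
      unfolding p_def q_def sample_conv_translate by (simp add: algebra_simps)
    then have "(real m)\<^sup>2 * \<bar>?f x - ?f (x + t)\<bar>\<^sup>2 = (q (x + t) - p x)\<^sup>2" for x
      by (metis power2_abs power_mult_distrib)
    also have "(q (x + t) - p x)\<^sup>2 \<le> 2 * (p x)\<^sup>2 + 2 * (q (x + t))\<^sup>2" for x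
      using sum_squares_ge_zero[of "q (x + t) + p x" 0] by (simp add: power2_eq_square algebra_simps)
    finally show ?thesis
      using assms(5) by (simp add: le_divide_eq sum_distrib_left sum_mono mult.commute)
  qed
  also have "\<dots> = (2 * sample_error A B a + 2 * sample_error A B ?a') / (real m)\<^sup>2"
    by (simp add: sum.distrib sum_distrib_left[symmetric] sum_p sum_q)
  also have "\<dots> \<le> 4 * c / (real m)\<^sup>2"
    using assms(6,7) by (simp add: divide_right_mono)
  finally show ?thesis .
qed

definition shifts :: "'a::ab_group_add list set \<Rightarrow> 'a set" where
  "shifts G = {t. \<exists>a\<in>G. map (\<lambda>y. y + t) a \<in> G}"

lemma sum_sq_diff_conv_le_if_mem_shifts_good_samples:
  assumes "finite A" "finite B" "m > 0" "t \<in> shifts (good_samples A B m)"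
  shows "(\<Sum>\<^sub>\<infinity>x. \<bar>conv A B x - conv A B (x + t)\<bar>\<^sup>2)
    \<le> 8 * (real (card A))\<^sup>2 * real (card B) / real m"
proof -
  let ?c = "2 * real m * (real (card A))\<^sup>2 * real (card B)"
  obtain a where "a \<in> good_samples A B m" "map (\<lambda>y. y + t) a \<in> good_samples A B m"
    using assms(4) by (auto simp: shifts_def)
  then have "(\<Sum>\<^sub>\<infinity>x. \<bar>conv A B x - conv A B (x + t)\<bar>\<^sup>2)
      \<le> 4 * ?c / (real m)\<^sup>2"
    using assms(1-3) by (intro sum_sq_diff_conv_translate_le) (auto simp: good_samples_def)
  also have "\<dots> = 8 * (real (card A))\<^sup>2 * real (card B) / real m"
    using assms(3) by (simp add: power2_eq_square field_simps)
  finally show ?thesis .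
qed

lemma card_sq_le_card_image_mult_sum_fibres_sq:
  assumes "finite S"
  shows "(real (card S))\<^sup>2
    \<le> real (card (f ` S)) * (\<Sum>t\<in>f ` S. (real (card {x\<in>S. f x = t}))\<^sup>2)"
proof -
  have "real (card S) = (\<Sum>t\<in>f ` S. real (card {x\<in>S. f x = t}))"
    using sum.image_gen[OF assms, of "\<lambda>_. 1 :: real" f] by simp
  then show ?thesis
    using sum_squared_le_sum_of_squares[of "\<lambda>t. real (card {x\<in>S. f x = t})" "f ` S"]
    by (simp add: mult.commute)
qed

lemma card_coincidences_eq_sum_fibres_sq:
  assumes "finite S"
  shows "real (card {(a, b)\<in>S \<times> S. f a = f b})
    = (\<Sum>t\<in>f ` S. (real (card {x\<in>S. f x = t}))\<^sup>2)"
proof -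
  have "{(a, b)\<in>S \<times> S. f a = f b} = Sigma S (\<lambda>a. {b\<in>S. f b = f a})" by auto
  then have "real (card {(a, b)\<in>S \<times> S. f a = f b}) = (\<Sum>a\<in>S. real (card {x\<in>S. f x = f a}))"
    using assms by (simp add: card_SigmaI)
  also have "\<dots> = (\<Sum>t\<in>f ` S. \<Sum>a\<in>{x\<in>S. f x = t}. real (card {x\<in>S. f x = f a}))"
    by (rule sum.image_gen[OF assms])
  also have "\<dots> = (\<Sum>t\<in>f ` S. (real (card {x\<in>S. f x = t}))\<^sup>2)"
    by (intro sum.cong refl) (simp add: power2_eq_square)
  finally show ?thesis .
qed

definition shape :: "'a::ab_group_add list \<Rightarrow> 'a list" where
  "shape a = map (\<lambda>y. y - hd a) a"

lemma shape_eq_imp_translate: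
  assumes "shape a = shape b" "length a = length b"
  shows "b = map (\<lambda>y. y + (hd b - hd a)) a"
proof (rule nth_equalityI)
  show "length b = length (map (\<lambda>y. y + (hd b - hd a)) a)" using assms(2) by simp
next
  fix i assume "i < length b"
  with assms have "a ! i - hd a = b ! i - hd b"
    by (metis length_map nth_map shape_def)
  with \<open>i < length b\<close> assms(2) show "b ! i = map (\<lambda>y. y + (hd b - hd a)) a ! i"
    by (simp add: algebra_simps)
qed

lemma finite_diffset: "finite A \<Longrightarrow> finite (diffset A A)"
proof -
  have "diffset A A = (\<lambda>(a, b). a - b) ` (A \<times> A)" unfolding diffset_def by auto
  then show "finite A \<Longrightarrow> finite (diffset A A)" by simp
qed

lemma corr_eq_card: "corr A t = real (card {y\<in>A. y + t \<in> A})"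
proof -
  have "bij_betw (\<lambda>y. (y, y + t)) {y\<in>A. y + t \<in> A} {(a, b)\<in>A \<times> A. b - a = t}"
    by (rule bij_betwI[where g = fst]) (auto simp: algebra_simps)
  then show ?thesis unfolding corr_def by (simp add: bij_betw_same_card)
qed

lemma corr_eq_0_outside_diffset: "t \<notin> diffset A A \<Longrightarrow> corr A t = 0"
  unfolding corr_eq_card diffset_def by (force simp: card_eq_0_iff)

lemma energy_eq_sum_diffset:
  "finite A \<Longrightarrow> j > 0 \<Longrightarrow> energy j A = (\<Sum>t\<in>diffset A A. corr A t ^ j)"
  unfolding energy_def
  by (rule infsum_eq_sum_outside_zero) (simp_all add: finite_diffset corr_eq_0_outside_diffset)

lemma shifts_subset_diffset:
  assumes "G \<subseteq> tuples A (Suc k)"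
  shows "shifts G \<subseteq> diffset A A"
proof
  fix t assume "t \<in> shifts G"
  then obtain a where "a \<in> G" "map (\<lambda>y. y + t) a \<in> G" by (auto simp: shifts_def)
  with assms have "a \<in> tuples A (Suc k)" "map (\<lambda>y. y + t) a \<in> tuples A (Suc k)" by auto
  then obtain y as where "a = y # as" "y \<in> A" "y + t \<in> A"
    unfolding tuples_def by (cases a) auto
  moreover have "t = (y + t) - y" by simp
  ultimately show "t \<in> diffset A A"
    unfolding diffset_def by blast
qed

lemma card_shapes_le:
  assumes "finite A" "G \<subseteq> tuples A (Suc k)"
  shows "card (shape ` G) \<le> card (diffset A A) ^ k"
proof -
  have "shape ` G \<subseteq> (\<lambda>d. 0 # d) ` tuples (diffset A A) k"
  proof
    fix s assume "s \<in> shape ` G"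
    then obtain a where a: "a \<in> G" "s = shape a" by auto
    with assms(2) obtain y as where "a = y # as" "y \<in> A" "set as \<subseteq> A" "length as = k"
      by (cases a) (auto simp: tuples_def)
    with a have "s = 0 # map (\<lambda>z. z - y) as" "map (\<lambda>z. z - y) as \<in> tuples (diffset A A) k"
      by (auto simp: shape_def tuples_def diffset_def)
    then show "s \<in> (\<lambda>d. 0 # d) ` tuples (diffset A A) k" by blast
  qed
  then have "card (shape ` G) \<le> card ((\<lambda>d. 0 # d) ` tuples (diffset A A) k)"
    by (simp add: card_mono finite_tuples finite_diffset assms(1))
  also have "\<dots> = card (diffset A A) ^ k"
    by (simp add: card_image card_tuples finite_diffset assms(1))
  finally show ?thesis .
qed

lemma card_translatable_le:
  assumes "finite A" "G \<subseteq> tuples A m"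
  shows "real (card {a\<in>G. map (\<lambda>y. y + t) a \<in> G}) \<le> corr A t ^ m"
proof -
  have "{a\<in>G. map (\<lambda>y. y + t) a \<in> G} \<subseteq> tuples {y\<in>A. y + t \<in> A} m"
  proof
    fix a assume "a \<in> {a\<in>G. map (\<lambda>y. y + t) a \<in> G}"
    with assms(2) have "a \<in> tuples A m" "map (\<lambda>y. y + t) a \<in> tuples A m" by auto
    then have "set a \<subseteq> A" "(\<lambda>y. y + t) ` set a \<subseteq> A" "length a = m"
      unfolding tuples_def by auto
    then show "a \<in> tuples {y\<in>A. y + t \<in> A} m" by (auto simp: tuples_def)
  qed
  then have "card {a\<in>G. map (\<lambda>y. y + t) a \<in> G} \<le> card (tuples {y\<in>A. y + t \<in> A} m)"
    by (rule card_mono[rotated]) (simp add: finite_tuples assms(1))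
  also have "\<dots> = card {y\<in>A. y + t \<in> A} ^ m"
    by (simp add: card_tuples assms(1))
  finally show ?thesis
    unfolding corr_eq_card by (simp flip: of_nat_power)
qed

lemma card_same_shape_sq_le:
  assumes "finite A" "G \<subseteq> tuples A (Suc k)"
  defines "R \<equiv> {(a, b)\<in>G \<times> G. shape a = shape b}"
  shows "(real (card R))\<^sup>2 \<le> real (card (shifts G)) * energy (2 * k + 2) A"
proof -
  define \<tau> where "\<tau> p = hd (snd p) - hd (fst p)" for p :: "'a list \<times> 'a list"
  have finG: "finite G" using assms(1,2) finite_subset finite_tuples by blast
  have finR: "finite R" unfolding R_def using finG by (auto intro: finite_subset)
  have in_G: "fst p \<in> G" "snd p \<in> G" if "p \<in> R" for p
    using that by (auto simp: R_def)
  have shifted: "snd p = map (\<lambda>y. y + \<tau> p) (fst p)" if "p \<in> R" for p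
  proof -
    obtain a b where p: "p = (a, b)" "a \<in> G" "b \<in> G" "shape a = shape b"
      using \<open>p \<in> R\<close> by (cases p) (auto simp: R_def)
    with assms(2) have "a \<in> tuples A (Suc k)" "b \<in> tuples A (Suc k)" by auto
    then have "length a = length b" by (simp add: tuples_def)
    with p show ?thesis by (simp add: \<tau>_def shape_eq_imp_translate)
  qed
  have images: "\<tau> ` R \<subseteq> shifts G"
  proof
    fix t assume "t \<in> \<tau> ` R"
    then obtain p where p: "p \<in> R" "t = \<tau> p" by blast
    then have "map (\<lambda>y. y + t) (fst p) \<in> G" using in_G shifted by simp
    with in_G[OF p(1)] show "t \<in> shifts G" unfolding shifts_def by blast
  qed
  then have finT: "finite (\<tau> ` R)" "\<tau> ` R \<subseteq> diffset A A"
    using shifts_subset_diffset[OF assms(2)] finite_diffset[OF assms(1)]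
    by (auto intro: finite_subset)
  have fibre: "real (card {p\<in>R. \<tau> p = t}) \<le> corr A t ^ Suc k" for t
  proof -
    have image: "fst ` {p\<in>R. \<tau> p = t} \<subseteq> {a\<in>G. map (\<lambda>y. y + t) a \<in> G}"
    proof
      fix a assume "a \<in> fst ` {p\<in>R. \<tau> p = t}"
      then obtain p where p: "p \<in> R" "\<tau> p = t" "a = fst p" by blast
      then show "a \<in> {a\<in>G. map (\<lambda>y. y + t) a \<in> G}"
        using in_G[OF p(1)] shifted[OF p(1)] by simp
    qed
    have "inj_on fst {p\<in>R. \<tau> p = t}"
    proof (rule inj_onI)
      fix p q assume "p \<in> {p\<in>R. \<tau> p = t}" "q \<in> {p\<in>R. \<tau> p = t}" "fst p = fst q"
      then have "snd p = snd q" using shifted by simp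
      with \<open>fst p = fst q\<close> show "p = q" by (simp add: prod_eq_iff)
    qed
    then have "card {p\<in>R. \<tau> p = t} = card (fst ` {p\<in>R. \<tau> p = t})"
      by (simp add: card_image)
    also have "\<dots> \<le> card {a\<in>G. map (\<lambda>y. y + t) a \<in> G}"
      using image finG by (intro card_mono) auto
    finally show ?thesis
      using card_translatable_le[OF assms(1,2), of t] by (meson of_nat_le_iff order_trans)
  qed
  have "(real (card R))\<^sup>2
      \<le> real (card (\<tau> ` R)) * (\<Sum>t\<in>\<tau> ` R. (real (card {p\<in>R. \<tau> p = t}))\<^sup>2)"
    by (rule card_sq_le_card_image_mult_sum_fibres_sq[OF finR])
  also have "\<dots> \<le> real (card (shifts G)) * (\<Sum>t\<in>diffset A A. corr A t ^ (2 * k + 2))"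
  proof (rule mult_mono)
    show "real (card (\<tau> ` R)) \<le> real (card (shifts G))"
      using images shifts_subset_diffset[OF assms(2)] finite_diffset[OF assms(1)]
      by (simp add: card_mono finite_subset)
    have "(real (card {p\<in>R. \<tau> p = t}))\<^sup>2 \<le> corr A t ^ (2 * k + 2)" for t
    proof -
      have "(real (card {p\<in>R. \<tau> p = t}))\<^sup>2 \<le> (corr A t ^ Suc k)\<^sup>2"
        using fibre by (intro power_mono) simp_all
      also have "\<dots> = corr A t ^ (2 * k + 2)"
        unfolding power_mult[symmetric] by (simp add: mult.commute)
      finally show ?thesis .
    qed
    then have "(\<Sum>t\<in>\<tau> ` R. (real (card {p\<in>R. \<tau> p = t}))\<^sup>2)
        \<le> (\<Sum>t\<in>\<tau> ` R. corr A t ^ (2 * k + 2))"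
      by (rule sum_mono)
    also have "\<dots> \<le> (\<Sum>t\<in>diffset A A. corr A t ^ (2 * k + 2))"
      using finT finite_diffset[OF assms(1)] by (intro sum_mono2) (simp_all add: corr_def)
    finally show "(\<Sum>t\<in>\<tau> ` R. (real (card {p\<in>R. \<tau> p = t}))\<^sup>2) \<le> \<dots>" .
  qed (simp_all add: sum_nonneg)
  also have "\<dots> = real (card (shifts G)) * energy (2 * k + 2) A"
    using assms(1) by (simp add: energy_eq_sum_diffset)
  finally show ?thesis .
qed

lemma card_pow4_le_shifts_energy:
  assumes "finite A" "G \<subseteq> tuples A (Suc k)"
  shows "real (card G) ^ 4
    \<le> real (card (diffset A A)) ^ (2 * k) * real (card (shifts G)) * energy (2 * k + 2) A"
proof -
  let ?R = "{(a, b)\<in>G \<times> G. shape a = shape b}"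
  have finG: "finite G" using assms finite_subset finite_tuples by blast
  have "(real (card G))\<^sup>2 \<le> real (card (shape ` G)) * real (card ?R)"
    unfolding card_coincidences_eq_sum_fibres_sq[OF finG]
    by (rule card_sq_le_card_image_mult_sum_fibres_sq[OF finG])
  also have "\<dots> \<le> real (card (diffset A A)) ^ k * real (card ?R)"
    using card_shapes_le[OF assms] by (intro mult_right_mono) (simp_all flip: of_nat_power)
  finally have "((real (card G))\<^sup>2)\<^sup>2 \<le> (real (card (diffset A A)) ^ k * real (card ?R))\<^sup>2"
    by (rule power_mono) simp
  also have "\<dots> = (real (card (diffset A A)) ^ k)\<^sup>2 * (real (card ?R))\<^sup>2"
    by (rule power_mult_distrib)
  also have "\<dots> \<le> (real (card (diffset A A)) ^ k)\<^sup>2 * (real (card (shifts G)) * energy (2 * k + 2) A)"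
    by (intro mult_left_mono card_same_shape_sq_le assms) simp
  finally show ?thesis by (simp add: power_mult[symmetric] mult_ac)
qed

lemma lower_bound_from_fourth_power:
  fixes n K M T :: real
  assumes "n > 0" "K > 0" "M > 0"
    and "(n ^ Suc k / 2) ^ 4 \<le> (K * n) ^ (2 * k) * T * (M * n ^ (2 * k + 3) / K ^ (2 * k + 1))"
  shows "K * n / (16 * M) \<le> T"
proof -
  have lhs: "(n ^ Suc k / 2) ^ 4 = n ^ (4 * k + 3) * (n / 16)"
    by (simp add: power_divide power_mult[symmetric] power_Suc[symmetric] algebra_simps del: power_Suc)
  have rhs: "(K * n) ^ (2 * k) * T * (M * n ^ (2 * k + 3) / K ^ (2 * k + 1))
      = n ^ (4 * k + 3) * (T * M / K)"
    using assms(2) by (simp add: power_mult_distrib power_add[symmetric] field_simps)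
  have "n / 16 \<le> T * M / K"
    using assms(4) unfolding lhs rhs by (rule mult_left_le_imp_le) (use assms(1) in simp)
  then show ?thesis
    using assms(2,3) by (simp add: field_simps)
qed

theorem theorem20:
  fixes A B :: "'a::ab_group_add set" and k :: nat and K M :: real
  assumes "finite A" "A \<noteq> {}" "finite B" "B \<noteq> {}"
    and "k \<ge> 1" and "K > 0" and "M > 0"
    and "real (card (diffset A A)) \<le> K * real (card A)"
    and "energy (2*k+2) A = M * real (card A) ^ (2*k+3) / K ^ (2*k+1)"
  shows "\<exists>T u. T \<subseteq> diffset A A \<and> real (card T) \<ge> K * real (card A) / (16 * M) \<and>
           (\<forall>t \<in> (\<lambda>s. s + u) ` T.
              (\<Sum>\<^sub>\<infinity> x. \<bar>conv A B x - conv A B (x + t)\<bar> ^ 2)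
                \<le> 32 * real (card A) ^ 2 * real (card B) / real k)"
proof -
  let ?n = "real (card A)" and ?G = "good_samples A B (Suc k)"
  have G: "?G \<subseteq> tuples A (Suc k)" by (auto simp: good_samples_def)
  have n: "?n > 0" using assms(1,2) by (simp add: card_gt_0_iff)
  have "(?n ^ Suc k / 2) ^ 4 \<le> real (card ?G) ^ 4"
    using card_good_samples[OF assms(1,3,2,4), of "Suc k"] by (intro power_mono) simp_all
  also have "\<dots> \<le> real (card (diffset A A)) ^ (2 * k) * real (card (shifts ?G)) * energy (2 * k + 2) A"
    by (rule card_pow4_le_shifts_energy[OF assms(1) G])
  also have "\<dots> \<le> (K * ?n) ^ (2 * k) * real (card (shifts ?G)) * energy (2 * k + 2) A"
    using assms(6,7,9) n by (intro mult_right_mono power_mono assms(8)) simp_all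
  finally have "K * ?n / (16 * M) \<le> real (card (shifts ?G))"
    using n assms(6,7) unfolding assms(9) by (rule lower_bound_from_fourth_power[rotated 3])
  moreover have "(\<Sum>\<^sub>\<infinity>x. \<bar>conv A B x - conv A B (x + t)\<bar>\<^sup>2)
      \<le> 32 * ?n\<^sup>2 * real (card B) / real k"
    if "t \<in> shifts ?G" for t
  proof -
    have "(\<Sum>\<^sub>\<infinity>x. \<bar>conv A B x - conv A B (x + t)\<bar>\<^sup>2)
        \<le> 8 * ?n\<^sup>2 * real (card B) / real (Suc k)"
      by (rule sum_sq_diff_conv_le_if_mem_shifts_good_samples[OF assms(1,3) zero_less_Suc that])
    also have "\<dots> \<le> 32 * ?n\<^sup>2 * real (card B) / real k"
      using assms(5) by (intro frac_le) simp_all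
    finally show ?thesis .
  qed
  ultimately show ?thesis
    using shifts_subset_diffset[OF G] by (intro exI[of _ "shifts ?G"] exI[of _ 0]) simp
qed

end
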